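(* Let $(a_n)_{n\ge0}$ be a bounded sequence of nonzero complex numbers such that the weighted shift $Te_n=a_ne_{n+1}$ is quasinilpotent. Let $S\in\mathcal A_T$ be nonzero and $k\ge1$ with $\hat S(j)=0$ for $j<k$ and $\hat S(k)\ne0$. If $S=T^kQ$ for some $Q\in\tilde{\mathcal A}_T$, then $\langle S\rangle=\langle T^k\rangle$. In particular, if $S=\sum_{j=k}^n\hat S(j)T^j$ is a polynomial in $T$ with $\hat S(k)\neq 0$, then $\langle S\rangle=\langle T^k\rangle$.
   Context: $H$ is a complex Hilbert space with orthonormal basis $\{e_n\}_{n\ge0}$, $Te_n=a_ne_{n+1}$, $\mathcal A_T$ is the operator-norm closure of the polynomials $p(T)$ with $p(0)=0$, and $\tilde{\mathcal A}_T=\mathcal A_T+\mathbb CI$ its unitization in $\mathcal B(H)$. For $R\in\mathcal A_T$, $\langle R\rangle$ is the smallest closed ideal of $\mathcal A_T$ containing $R$. For $\lambda$ in the unit circle $\mathbb T$ let $W_\lambda e_n=\lambda^ne_n$ and $\gamma_\lambda(S)=W_\lambda SW_\lambda^*$ (a norm-continuous action of $\mathbb T$ on $\mathcal A_T$ by isometric automorphisms with $\gamma_\lambda(T)=\lambda T$). For $S\in\mathcal A_T$, $j\ge1$, $\hat S(j)\in\mathbb C$ is defined by $\int_{\mathbb T}\gamma_\lambda(S)\lambda^{-j}\,dm(\lambda)=\hat S(j)T^j$ ($dm$ normalized Haar measure). *)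

theory Defs
  imports "HOL-Analysis.Analysis"
begin

text \<open>We identify H with l2(N) via the orthonormal basis e_n, and a bounded
operator with its matrix  M i j = <M e_j, e_i>.\<close>

type_synonym mat = "nat \<Rightarrow> nat \<Rightarrow> complex"

definition fin_supp :: "(nat \<Rightarrow> complex) \<Rightarrow> bool" where
  "fin_supp x \<longleftrightarrow> finite {j. x j \<noteq> 0}"

definition mvec :: "mat \<Rightarrow> (nat \<Rightarrow> complex) \<Rightarrow> nat \<Rightarrow> complex" where
  "mvec M x i = (\<Sum>j\<in>{j. x j \<noteq> 0}. M i j * x j)"

definition normsq_fs :: "(nat \<Rightarrow> complex) \<Rightarrow> real" where
  "normsq_fs x = (\<Sum>j\<in>{j. x j \<noteq> 0}. (cmod (x j))\<^sup>2)"

text \<open>M defines a bounded operator on l2 with norm at most C.\<close>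
definition bounded_by :: "mat \<Rightarrow> real \<Rightarrow> bool" where
  "bounded_by M C \<longleftrightarrow> C \<ge> 0 \<and> (\<forall>x. fin_supp x \<longrightarrow>
      (\<forall>N. (\<Sum>i<N. (cmod (mvec M x i))\<^sup>2) \<le> C\<^sup>2 * normsq_fs x))"

definition bounded_mat :: "mat \<Rightarrow> bool" where
  "bounded_mat M \<longleftrightarrow> (\<exists>C. bounded_by M C)"

definition opnorm :: "mat \<Rightarrow> real" where
  "opnorm M = Inf {C. bounded_by M C}"

definition mzero :: mat where "mzero = (\<lambda>i j. 0)"
definition mid :: mat where "mid = (\<lambda>i j. if i = j then 1 else 0)"
definition madd :: "mat \<Rightarrow> mat \<Rightarrow> mat" where "madd A B = (\<lambda>i j. A i j + B i j)"
definition msub :: "mat \<Rightarrow> mat \<Rightarrow> mat" where "msub A B = (\<lambda>i j. A i j - B i j)"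
definition msmul :: "complex \<Rightarrow> mat \<Rightarrow> mat" where "msmul c A = (\<lambda>i j. c * A i j)"
definition mmul :: "mat \<Rightarrow> mat \<Rightarrow> mat" where
  "mmul A B = (\<lambda>i j. \<Sum>k. A i k * B k j)"

primrec mpow :: "mat \<Rightarrow> nat \<Rightarrow> mat" where
  "mpow M 0 = mid"
| "mpow M (Suc n) = mmul M (mpow M n)"

definition invertible_mat :: "mat \<Rightarrow> bool" where
  "invertible_mat M \<longleftrightarrow> (\<exists>B. bounded_mat B \<and> mmul M B = mid \<and> mmul B M = mid)"

definition mspectrum :: "mat \<Rightarrow> complex set" where
  "mspectrum M = {z. \<not> invertible_mat (msub M (msmul z mid))}"

definition quasinilpotent :: "mat \<Rightarrow> bool" where
  "quasinilpotent M \<longleftrightarrow> bounded_mat M \<and> mspectrum M = {0}"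

text \<open>Weighted shift T e_n = a_n e_(n+1).\<close>
definition Tm :: "(nat \<Rightarrow> complex) \<Rightarrow> mat" where
  "Tm a = (\<lambda>i j. if i = Suc j then a j else 0)"

definition polys_T :: "(nat \<Rightarrow> complex) \<Rightarrow> mat set" where
  "polys_T a = {P. \<exists>n c. P = (\<lambda>i j. \<Sum>k\<in>{1..n}. c k * mpow (Tm a) k i j)}"

definition A_T :: "(nat \<Rightarrow> complex) \<Rightarrow> mat set" where
  "A_T a = {S. bounded_mat S \<and> (\<forall>\<epsilon>>0. \<exists>P\<in>polys_T a. opnorm (msub S P) < \<epsilon>)}"

definition unitA_T :: "(nat \<Rightarrow> complex) \<Rightarrow> mat set" where
  "unitA_T a = {madd S (msmul c mid) | S c. S \<in> A_T a}"

definition closed_ideal :: "(nat \<Rightarrow> complex) \<Rightarrow> mat set \<Rightarrow> bool" where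
  "closed_ideal a J \<longleftrightarrow> J \<subseteq> A_T a \<and> mzero \<in> J
     \<and> (\<forall>X\<in>J. \<forall>Y\<in>J. madd X Y \<in> J)
     \<and> (\<forall>X\<in>J. \<forall>c. msmul c X \<in> J)
     \<and> (\<forall>X\<in>J. \<forall>B\<in>A_T a. mmul B X \<in> J \<and> mmul X B \<in> J)
     \<and> (\<forall>S. bounded_mat S \<and> (\<forall>\<epsilon>>0. \<exists>X\<in>J. opnorm (msub S X) < \<epsilon>) \<longrightarrow> S \<in> J)"

definition gen_ideal :: "(nat \<Rightarrow> complex) \<Rightarrow> mat \<Rightarrow> mat set" where
  "gen_ideal a R = \<Inter>{J. closed_ideal a J \<and> R \<in> J}"

text \<open>gamma_lambda(S) = W_lambda S W_lambda^*, with W_lambda e_n = lambda^n e_n.\<close>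
definition gamma_mat :: "complex \<Rightarrow> mat \<Rightarrow> mat" where
  "gamma_mat lam S = (\<lambda>i j. lam ^ i * S i j * cnj lam ^ j)"

text \<open>The operator integral of gamma_lambda(S) lambda^(-j) dm(lambda), computed entrywise
  (lambda = cis(2 pi t), t in [0,1], dm normalized Haar measure).\<close>
definition fourier_mat :: "mat \<Rightarrow> nat \<Rightarrow> mat" where
  "fourier_mat S j = (\<lambda>p q. integral {0..1::real}
      (\<lambda>t. gamma_mat (cis (2 * pi * t)) S p q * inverse (cis (2 * pi * t) ^ j)))"

definition hat :: "(nat \<Rightarrow> complex) \<Rightarrow> mat \<Rightarrow> nat \<Rightarrow> complex" where
  "hat a S j = (THE c. fourier_mat S j = msmul c (mpow (Tm a) j))"

end

theory Submission
  imports Defs "HOL-Computational_Algebra.Formal_Power_Series"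
begin

text \<open>Every element of \<open>A_T\<close> is a power series \<open>\<Sum>\<^sub>m r\<^sub>m T^m\<close> without constant term,
  realised as a weighted lower-triangular Toeplitz matrix, and these matrices multiply like formal
  power series. Quasinilpotence of \<open>T\<close> makes the weights \<open>a\<^sub>j \<cdots> a\<^sub>j\<^sub>+\<^sub>m\<^sub>-\<^sub>1\<close> decay faster than
  any geometric sequence, hence every element of \<open>A_T\<close> is quasinilpotent too.
  Writing \<open>S = T^k (R + c)\<close> with \<open>R \<in> A_T\<close>, the coefficient of \<open>T^k\<close> in \<open>S\<close> is \<open>c\<close>, so
  \<open>c \<noteq> 0\<close>. Then \<open>T^k = S c\<^sup>-\<^sup>1 \<Sum>\<^sub>m (-R/c)^m\<close> is a norm-convergent series in \<open>\<langle>S\<rangle>\<close>,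
  while \<open>S = T^k R + c T^k \<in> \<langle>T^k\<rangle>\<close> is immediate. A polynomial \<open>\<Sum>\<^sub>j\<^sub>\<ge>\<^sub>k \<hat>S(j) T^j\<close> is of
  the form \<open>T^k Q\<close> with \<open>Q\<close> in the unitization.\<close>

section \<open>Weighted Toeplitz matrices\<close>

definition shift_weight :: "(nat \<Rightarrow> complex) \<Rightarrow> nat \<Rightarrow> nat \<Rightarrow> complex" where
  "shift_weight a j m = (\<Prod>l\<in>{j..<j+m}. a l)"

text \<open>The matrix of \<open>\<Sum>\<^sub>m f\<^sub>m T\<^sup>m\<close>, since \<open>T\<^sup>m e\<^sub>j = shift_weight a j m \<cdot> e\<^sub>j\<^sub>+\<^sub>m\<close>.\<close>
definition shift_series :: "(nat \<Rightarrow> complex) \<Rightarrow> complex fps \<Rightarrow> mat" where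
  "shift_series a f = (\<lambda>i j. if j \<le> i then fps_nth f (i - j) * shift_weight a j (i - j) else 0)"

definition lower_triangular :: "mat \<Rightarrow> bool" where
  "lower_triangular M \<longleftrightarrow> (\<forall>i k. i < k \<longrightarrow> M i k = 0)"

lemma shift_weight_0 [simp]: "shift_weight a j 0 = 1"
  by (simp add: shift_weight_def)

lemma shift_weight_Suc_0 [simp]: "shift_weight a j (Suc 0) = a j" "shift_weight a j 1 = a j"
  by (simp_all add: shift_weight_def)

lemma shift_weight_add: "shift_weight a j (m + n) = shift_weight a j m * shift_weight a (j + m) n"
  unfolding shift_weight_def
  by (subst prod.atLeastLessThan_concat[symmetric, of j "j + m"]) (auto simp: add.assoc)

lemma shift_weight_nonzero: "\<forall>n. a n \<noteq> 0 \<Longrightarrow> shift_weight a j m \<noteq> 0"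
  by (simp add: shift_weight_def)

lemma norm_shift_weight_le:
  assumes "\<forall>n. cmod (a n) \<le> B"
  shows "cmod (shift_weight a j m) \<le> B ^ m"
proof -
  have "cmod (shift_weight a j m) = (\<Prod>l\<in>{j..<j+m}. cmod (a l))"
    by (simp add: shift_weight_def prod_norm)
  also have "\<dots> \<le> (\<Prod>l\<in>{j..<j+m}. B)"
    using assms by (intro prod_mono) auto
  finally show ?thesis by simp
qed

lemma mmul_lower_triangular:
  assumes "lower_triangular A"
  shows "mmul A B i j = (\<Sum>k\<le>i. A i k * B k j)"
  unfolding mmul_def by (rule suminf_finite) (use assms in \<open>auto simp: lower_triangular_def\<close>)

lemma lower_triangular_shift_series: "lower_triangular (shift_series a f)"
  by (simp add: lower_triangular_def shift_series_def)

lemma mmul_shift_series: "mmul (shift_series a f) (shift_series a g) = shift_series a (f * g)"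
proof (intro ext)
  fix i j
  show "mmul (shift_series a f) (shift_series a g) i j = shift_series a (f * g) i j"
  proof (cases "j \<le> i")
    case False
    then show ?thesis
      by (subst mmul_lower_triangular[OF lower_triangular_shift_series])
        (auto simp: shift_series_def intro!: sum.neutral)
  next
    case True
    have "mmul (shift_series a f) (shift_series a g) i j
        = (\<Sum>k\<le>i. shift_series a f i k * shift_series a g k j)"
      by (rule mmul_lower_triangular[OF lower_triangular_shift_series])
    also have "\<dots> = (\<Sum>k\<in>{j..i}. shift_series a f i k * shift_series a g k j)"
      by (rule sum.mono_neutral_right) (auto simp: shift_series_def)
    also have "\<dots> = (\<Sum>k\<in>{j..i}. fps_nth f (i - k) * fps_nth g (k - j)) * shift_weight a j (i - j)"
      unfolding sum_distrib_right
    proof (rule sum.cong[OF refl])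
      fix k assume k: "k \<in> {j..i}"
      then have "shift_weight a j (i - j) = shift_weight a j (k - j) * shift_weight a k (i - k)"
        using shift_weight_add[of a j "k - j" "i - k"] by auto
      with k show "shift_series a f i k * shift_series a g k j
          = fps_nth f (i - k) * fps_nth g (k - j) * shift_weight a j (i - j)"
        by (simp add: shift_series_def)
    qed
    also have "(\<Sum>k\<in>{j..i}. fps_nth f (i - k) * fps_nth g (k - j)) = (\<Sum>l\<in>{0..i - j}. fps_nth g l * fps_nth f (i - j - l))"
      using True by (intro sum.reindex_bij_witness[of _ "\<lambda>l. l + j" "\<lambda>k. k - j"]) auto
    also have "\<dots> = fps_nth (f * g) (i - j)"
      by (simp add: fps_mult_nth mult.commute[of f])
    finally show ?thesis
      using True by (simp add: shift_series_def)
  qed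
qed

lemma madd_shift_series: "madd (shift_series a f) (shift_series a g) = shift_series a (f + g)"
  by (auto simp: madd_def shift_series_def fun_eq_iff algebra_simps)

lemma msub_shift_series: "msub (shift_series a f) (shift_series a g) = shift_series a (f - g)"
  by (auto simp: msub_def shift_series_def fun_eq_iff algebra_simps)

lemma msmul_shift_series: "msmul c (shift_series a f) = shift_series a (fps_const c * f)"
  by (auto simp: msmul_def shift_series_def fun_eq_iff)

lemma shift_series_0: "shift_series a 0 = mzero"
  by (auto simp: mzero_def shift_series_def fun_eq_iff)

lemma shift_series_1: "shift_series a 1 = mid"
  by (auto simp: mid_def shift_series_def fun_eq_iff)

lemma shift_series_X: "shift_series a fps_X = Tm a"
  by (auto simp: Tm_def shift_series_def fun_eq_iff fps_X_def)

lemma mpow_Tm: "mpow (Tm a) n = shift_series a (fps_X ^ n)"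
  by (induction n) (simp_all add: shift_series_1 shift_series_X[symmetric] mmul_shift_series)

lemma shift_series_sum:
  "(\<lambda>i j. \<Sum>k\<in>A. shift_series a (f k) i j) = shift_series a (\<Sum>k\<in>A. f k)"
  by (cases "finite A") (auto simp: shift_series_def fun_eq_iff fps_sum_nth sum_distrib_right)

lemma sum_mpow_Tm:
  "(\<lambda>i j. \<Sum>k\<in>A. c k * mpow (Tm a) k i j) = shift_series a (\<Sum>k\<in>A. fps_const (c k) * fps_X ^ k)"
  by (subst shift_series_sum[symmetric]) (simp add: mpow_Tm msmul_shift_series[symmetric] msmul_def)

section \<open>Operator norm\<close>

lemma normsq_fs_nonneg: "normsq_fs x \<ge> 0"
  by (simp add: normsq_fs_def sum_nonneg)

lemma sum_power2_le_normsq_fs: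
  assumes "fin_supp x" "finite A"
  shows "(\<Sum>j\<in>A. (cmod (x j))\<^sup>2) \<le> normsq_fs x"
proof -
  have "(\<Sum>j\<in>A. (cmod (x j))\<^sup>2) = (\<Sum>j\<in>A \<inter> {j. x j \<noteq> 0}. (cmod (x j))\<^sup>2)"
    using assms by (intro sum.mono_neutral_right) auto
  also have "\<dots> \<le> normsq_fs x"
    unfolding normsq_fs_def using assms by (intro sum_mono2) (auto simp: fin_supp_def)
  finally show ?thesis .
qed

lemma normsq_fs_eq_sum:
  assumes "{j. x j \<noteq> 0} \<subseteq> A" "finite A"
  shows "normsq_fs x = (\<Sum>j\<in>A. (cmod (x j))\<^sup>2)"
  unfolding normsq_fs_def using assms by (intro sum.mono_neutral_left) auto

lemma mvec_eq_sum:
  assumes "{j. x j \<noteq> 0} \<subseteq> A" "finite A"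
  shows "mvec M x i = (\<Sum>j\<in>A. M i j * x j)"
  unfolding mvec_def using assms by (intro sum.mono_neutral_left) auto

lemma mvec_madd: "mvec (madd A B) x i = mvec A x i + mvec B x i"
  by (simp add: mvec_def madd_def algebra_simps sum.distrib)

lemma mvec_msmul: "mvec (msmul c A) x i = c * mvec A x i"
  by (simp add: mvec_def msmul_def algebra_simps sum_distrib_left)

lemma bounded_by_entry:
  assumes "bounded_by M C"
  shows "cmod (M i j) \<le> C"
proof -
  define x where "x = (\<lambda>n. if n = j then (1::complex) else 0)"
  have x: "fin_supp x"
    by (simp add: fin_supp_def x_def)
  have "mvec M x i = M i j"
    by (subst mvec_eq_sum[of _ "{j}"]) (auto simp: x_def)
  moreover have "normsq_fs x = 1"
    by (subst normsq_fs_eq_sum[of _ "{j}"]) (auto simp: x_def)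
  moreover have "(cmod (mvec M x i))\<^sup>2 \<le> (\<Sum>i'<Suc i. (cmod (mvec M x i'))\<^sup>2)"
    by (rule member_le_sum) auto
  moreover have "(\<Sum>i'<Suc i. (cmod (mvec M x i'))\<^sup>2) \<le> C\<^sup>2 * normsq_fs x"
    using assms x unfolding bounded_by_def by blast
  ultimately have "(cmod (M i j))\<^sup>2 \<le> C\<^sup>2"
    by simp
  then show ?thesis
    using assms power2_le_imp_le by (auto simp: bounded_by_def)
qed

lemma opnorm_le: "bounded_by M C \<Longrightarrow> opnorm M \<le> C"
  unfolding opnorm_def by (rule cInf_lower) (auto simp: bounded_by_def bdd_below_def)

lemma opnorm_nonneg: "bounded_mat M \<Longrightarrow> opnorm M \<ge> 0"
  unfolding opnorm_def bounded_mat_def by (rule cInf_greatest) (auto simp: bounded_by_def)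

lemma bounded_by_opnorm:
  assumes "bounded_mat M"
  shows "bounded_by M (opnorm M)"
proof -
  have ne: "{C. bounded_by M C} \<noteq> {}"
    using assms by (auto simp: bounded_mat_def)
  have "(\<Sum>i<N. (cmod (mvec M x i))\<^sup>2) \<le> (opnorm M)\<^sup>2 * normsq_fs x" if x: "fin_supp x" for x N
  proof -
    let ?s = "\<Sum>i<N. (cmod (mvec M x i))\<^sup>2" and ?n = "normsq_fs x"
    show ?thesis
    proof (cases "?n = 0")
      case True
      then show ?thesis
        using x ne by (auto simp: bounded_by_def)
    next
      case False
      then have n: "?n > 0"
        using normsq_fs_nonneg[of x] by simp
      have "sqrt (?s / ?n) \<le> opnorm M"
        unfolding opnorm_def
      proof (rule cInf_greatest[OF ne])
        fix C assume "C \<in> {C. bounded_by M C}"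
        then have "?s / ?n \<le> C\<^sup>2" "C \<ge> 0"
          using x n by (auto simp: bounded_by_def divide_le_eq)
        then show "sqrt (?s / ?n) \<le> C"
          by (intro real_le_lsqrt) auto
      qed
      then have "(sqrt (?s / ?n))\<^sup>2 \<le> (opnorm M)\<^sup>2"
        using n by (intro power_mono) (auto simp: sum_nonneg)
      then have "?s / ?n \<le> (opnorm M)\<^sup>2"
        using n by (simp add: sum_nonneg)
      then show ?thesis
        using n by (simp add: divide_le_eq)
    qed
  qed
  then show ?thesis
    using opnorm_nonneg[OF assms] by (simp add: bounded_by_def)
qed

lemma norm_entry_le_opnorm: "bounded_mat M \<Longrightarrow> cmod (M i j) \<le> opnorm M"
  using bounded_by_entry bounded_by_opnorm by blast

lemma bounded_by_madd:
  assumes "bounded_by A CA" "bounded_by B CB"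
  shows "bounded_by (madd A B) (CA + CB)"
proof -
  have C: "CA \<ge> 0" "CB \<ge> 0"
    using assms by (auto simp: bounded_by_def)
  have "(\<Sum>i<N. (cmod (mvec (madd A B) x i))\<^sup>2) \<le> (CA + CB)\<^sup>2 * normsq_fs x"
    if x: "fin_supp x" for x N
  proof -
    let ?n = "normsq_fs x" and ?L = "\<lambda>M. L2_set (\<lambda>i. cmod (mvec M x i)) {..<N}"
    have L2_bound: "?L M \<le> CM * sqrt ?n" if "bounded_by M CM" for M CM
    proof -
      have "(?L M)\<^sup>2 = (\<Sum>i<N. (cmod (mvec M x i))\<^sup>2)"
        by (simp add: L2_set_def sum_nonneg)
      also have "\<dots> \<le> CM\<^sup>2 * ?n"
        using that x by (simp add: bounded_by_def)
      also have "\<dots> = (CM * sqrt ?n)\<^sup>2"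
        using normsq_fs_nonneg[of x] by (simp add: power_mult_distrib)
      finally have "(?L M)\<^sup>2 \<le> (CM * sqrt ?n)\<^sup>2" .
      moreover have "CM \<ge> 0"
        using that unfolding bounded_by_def by blast
      ultimately show ?thesis
        using normsq_fs_nonneg power2_le_imp_le by (metis mult_nonneg_nonneg real_sqrt_ge_zero)
    qed
    have "?L (madd A B) \<le> L2_set (\<lambda>i. cmod (mvec A x i) + cmod (mvec B x i)) {..<N}"
      by (rule L2_set_mono) (auto simp: mvec_madd norm_triangle_ineq)
    also have "\<dots> \<le> ?L A + ?L B"
      by (rule L2_set_triangle_ineq)
    also have "\<dots> \<le> (CA + CB) * sqrt ?n"
      using L2_bound[OF assms(1)] L2_bound[OF assms(2)] by (simp add: algebra_simps)
    finally have "(?L (madd A B))\<^sup>2 \<le> ((CA + CB) * sqrt ?n)\<^sup>2"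
      by (intro power_mono) (auto simp: L2_set_nonneg)
    moreover have "(?L (madd A B))\<^sup>2 = (\<Sum>i<N. (cmod (mvec (madd A B) x i))\<^sup>2)"
      by (simp add: L2_set_def sum_nonneg)
    ultimately show ?thesis
      using normsq_fs_nonneg[of x] by (simp add: power_mult_distrib)
  qed
  then show ?thesis
    using C by (simp add: bounded_by_def)
qed

lemma bounded_by_msmul:
  assumes "bounded_by A C"
  shows "bounded_by (msmul c A) (cmod c * C)"
proof -
  have "(\<Sum>i<N. (cmod (mvec (msmul c A) x i))\<^sup>2) \<le> (cmod c * C)\<^sup>2 * normsq_fs x"
    if "fin_supp x" for x N
  proof -
    have "(\<Sum>i<N. (cmod (mvec (msmul c A) x i))\<^sup>2) = (cmod c)\<^sup>2 * (\<Sum>i<N. (cmod (mvec A x i))\<^sup>2)"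
      by (simp add: mvec_msmul norm_mult power_mult_distrib sum_distrib_left)
    also have "\<dots> \<le> (cmod c)\<^sup>2 * (C\<^sup>2 * normsq_fs x)"
      using assms that by (intro mult_left_mono) (auto simp: bounded_by_def)
    finally show ?thesis
      by (simp add: power_mult_distrib)
  qed
  then show ?thesis
    using assms by (simp add: bounded_by_def)
qed

text \<open>Lower triangularity of \<open>A\<close> makes \<open>(A B x)\<^sub>i\<close>, \<open>i < N\<close>, depend only on the first \<open>N\<close>
  coordinates of \<open>B x\<close>, so the finitely supported truncation \<open>y\<close> of \<open>B x\<close> can be fed to \<open>A\<close>.\<close>
lemma bounded_by_mmul:
  assumes "bounded_by A CA" "bounded_by B CB" "lower_triangular A"
  shows "bounded_by (mmul A B) (CA * CB)"
proof -
  have "(\<Sum>i<N. (cmod (mvec (mmul A B) x i))\<^sup>2) \<le> (CA * CB)\<^sup>2 * normsq_fs x"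
    if x: "fin_supp x" for x N
  proof -
    define X where "X = {j. x j \<noteq> 0}"
    define y where "y = (\<lambda>k. if k < N then mvec B x k else 0)"
    have y: "fin_supp y"
      unfolding fin_supp_def y_def by (rule finite_subset[of _ "{..<N}"]) auto
    have mvec_mmul: "mvec (mmul A B) x i = mvec A y i" if "i < N" for i
    proof -
      have "mvec (mmul A B) x i = (\<Sum>j\<in>X. \<Sum>k\<le>i. A i k * B k j * x j)"
        unfolding mvec_def X_def[symmetric] mmul_lower_triangular[OF assms(3)]
        by (simp add: sum_distrib_right)
      also have "\<dots> = (\<Sum>k\<le>i. A i k * (\<Sum>j\<in>X. B k j * x j))"
        by (subst sum.swap) (simp add: sum_distrib_left mult.assoc)
      also have "\<dots> = (\<Sum>k<N. A i k * y k)"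
        using that assms(3) by (intro sum.mono_neutral_cong_left)
          (auto simp: lower_triangular_def y_def mvec_def X_def)
      also have "\<dots> = mvec A y i"
        by (rule mvec_eq_sum[symmetric]) (auto simp: y_def)
      finally show ?thesis .
    qed
    have "(\<Sum>i<N. (cmod (mvec (mmul A B) x i))\<^sup>2) = (\<Sum>i<N. (cmod (mvec A y i))\<^sup>2)"
      using mvec_mmul by simp
    also have "\<dots> \<le> CA\<^sup>2 * normsq_fs y"
      using assms(1) y by (simp add: bounded_by_def)
    also have "normsq_fs y = (\<Sum>k<N. (cmod (mvec B x k))\<^sup>2)"
      by (subst normsq_fs_eq_sum[of _ "{..<N}"]) (auto simp: y_def)
    also have "CA\<^sup>2 * \<dots> \<le> CA\<^sup>2 * (CB\<^sup>2 * normsq_fs x)"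
      using assms(2) x by (intro mult_left_mono) (auto simp: bounded_by_def)
    finally show ?thesis
      by (simp add: power_mult_distrib)
  qed
  then show ?thesis
    using assms by (simp add: bounded_by_def)
qed

lemma bounded_mat_madd:
  assumes "bounded_mat A" "bounded_mat B"
  shows "bounded_mat (madd A B) \<and> opnorm (madd A B) \<le> opnorm A + opnorm B"
  using bounded_by_madd[OF bounded_by_opnorm[OF assms(1)] bounded_by_opnorm[OF assms(2)]]
  by (auto simp: bounded_mat_def intro: opnorm_le)

lemma bounded_mat_msmul:
  assumes "bounded_mat A"
  shows "bounded_mat (msmul c A) \<and> opnorm (msmul c A) \<le> cmod c * opnorm A"
  using bounded_by_msmul[OF bounded_by_opnorm[OF assms]]
  by (auto simp: bounded_mat_def intro: opnorm_le)

lemma bounded_mat_msub: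
  assumes "bounded_mat A" "bounded_mat B"
  shows "bounded_mat (msub A B) \<and> opnorm (msub A B) \<le> opnorm A + opnorm B"
proof -
  have "msub A B = madd A (msmul (-1) B)"
    by (simp add: msub_def madd_def msmul_def fun_eq_iff)
  then show ?thesis
    using bounded_mat_madd[OF assms(1), of "msmul (-1) B"] bounded_mat_msmul[OF assms(2), of "-1"]
    by auto
qed

lemma bounded_mat_mmul:
  assumes "bounded_mat A" "bounded_mat B" "lower_triangular A"
  shows "bounded_mat (mmul A B) \<and> opnorm (mmul A B) \<le> opnorm A * opnorm B"
  using bounded_by_mmul[OF bounded_by_opnorm[OF assms(1)] bounded_by_opnorm[OF assms(2)] assms(3)]
  by (auto simp: bounded_mat_def intro: opnorm_le)

lemma bounded_by_mzero: "bounded_by mzero 0"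
proof -
  have "mvec mzero x i = 0" for x i
    by (simp add: mvec_def mzero_def)
  then show ?thesis
    by (simp add: bounded_by_def normsq_fs_nonneg)
qed

lemma opnorm_mzero: "opnorm mzero = 0"
proof (rule antisym)
  show "opnorm mzero \<le> 0"
    by (rule opnorm_le[OF bounded_by_mzero])
  show "0 \<le> opnorm mzero"
    by (rule opnorm_nonneg) (auto simp: bounded_mat_def intro: bounded_by_mzero)
qed

abbreviation series_bounded :: "(nat \<Rightarrow> complex) \<Rightarrow> complex fps \<Rightarrow> bool" where
  "series_bounded a f \<equiv> bounded_mat (shift_series a f)"

abbreviation series_norm :: "(nat \<Rightarrow> complex) \<Rightarrow> complex fps \<Rightarrow> real" where
  "series_norm a f \<equiv> opnorm (shift_series a f)"

lemma series_norm_add: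
  "series_bounded a f \<Longrightarrow> series_bounded a g \<Longrightarrow>
    series_bounded a (f + g) \<and> series_norm a (f + g) \<le> series_norm a f + series_norm a g"
  using bounded_mat_madd[of "shift_series a f" "shift_series a g"] by (simp add: madd_shift_series)

lemma series_norm_diff:
  "series_bounded a f \<Longrightarrow> series_bounded a g \<Longrightarrow>
    series_bounded a (f - g) \<and> series_norm a (f - g) \<le> series_norm a f + series_norm a g"
  using bounded_mat_msub[of "shift_series a f" "shift_series a g"] by (simp add: msub_shift_series)

lemma series_norm_smult:
  "series_bounded a f \<Longrightarrow>
    series_bounded a (fps_const c * f) \<and> series_norm a (fps_const c * f) \<le> cmod c * series_norm a f"
  using bounded_mat_msmul[of "shift_series a f" c] by (simp add: msmul_shift_series)

lemma series_norm_mult: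
  "series_bounded a f \<Longrightarrow> series_bounded a g \<Longrightarrow>
    series_bounded a (f * g) \<and> series_norm a (f * g) \<le> series_norm a f * series_norm a g"
  using bounded_mat_mmul[of "shift_series a f" "shift_series a g"]
  by (simp add: mmul_shift_series lower_triangular_shift_series)

lemma series_norm_sum:
  assumes "finite A" "\<And>k. k \<in> A \<Longrightarrow> series_bounded a (f k)"
  shows "series_bounded a (\<Sum>k\<in>A. f k) \<and> series_norm a (\<Sum>k\<in>A. f k) \<le> (\<Sum>k\<in>A. series_norm a (f k))"
  using assms
proof (induction A rule: finite_induct)
  case empty
  then show ?case
    using bounded_by_mzero opnorm_mzero by (auto simp: shift_series_0 bounded_mat_def)
next
  case (insert x F)
  then show ?case
    using series_norm_add[of a "f x" "sum f F"] by auto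
qed

lemma sum_lessThan_shift:
  "(\<Sum>i<(n::nat). if m \<le> i then f (i - m) else 0) = (\<Sum>j<n - m. f j :: real)"
  by (induction n) (auto simp: Suc_diff_le not_less_eq_eq)

lemma bounded_by_shift_series_X_power:
  assumes "\<And>j. cmod (shift_weight a j m) \<le> w" "w \<ge> 0"
  shows "bounded_by (shift_series a (fps_X ^ m)) w"
proof -
  have "(\<Sum>i<N. (cmod (mvec (shift_series a (fps_X ^ m)) x i))\<^sup>2) \<le> w\<^sup>2 * normsq_fs x"
    if x: "fin_supp x" for x N
  proof -
    have mvec_eq: "mvec (shift_series a (fps_X ^ m)) x i
        = (if m \<le> i then shift_weight a (i - m) m * x (i - m) else 0)" for i
    proof -
      have "mvec (shift_series a (fps_X ^ m)) x i
          = (\<Sum>j\<in>{j. x j \<noteq> 0}. if j = i - m \<and> m \<le> i then shift_weight a j m * x j else 0)"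
        unfolding mvec_def by (intro sum.cong refl) (auto simp: shift_series_def fps_X_power_nth)
      also have "\<dots> = (if m \<le> i then shift_weight a (i - m) m * x (i - m) else 0)"
        using x by (auto simp: fin_supp_def)
      finally show ?thesis .
    qed
    have "(\<Sum>i<N. (cmod (mvec (shift_series a (fps_X ^ m)) x i))\<^sup>2)
        \<le> (\<Sum>i<N. if m \<le> i then w\<^sup>2 * (cmod (x (i - m)))\<^sup>2 else 0)"
      unfolding mvec_eq using assms
      by (intro sum_mono) (auto simp: norm_mult power_mult_distrib intro!: mult_right_mono power_mono)
    also have "\<dots> = w\<^sup>2 * (\<Sum>j<N - m. (cmod (x j))\<^sup>2)"
      using sum_lessThan_shift[where n = N and m = m and f = "\<lambda>j. w\<^sup>2 * (cmod (x j))\<^sup>2"]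
      by (simp add: sum_distrib_left)
    also have "\<dots> \<le> w\<^sup>2 * normsq_fs x"
      using sum_power2_le_normsq_fs[OF x] by (intro mult_left_mono) auto
    finally show ?thesis .
  qed
  then show ?thesis
    using assms by (simp add: bounded_by_def)
qed

lemma series_norm_X_power:
  assumes "\<And>j. cmod (shift_weight a j m) \<le> w"
  shows "series_bounded a (fps_X ^ m) \<and> series_norm a (fps_X ^ m) \<le> w"
proof -
  have "w \<ge> 0"
    using assms[of 0] norm_ge_zero order_trans by blast
  then show ?thesis
    using bounded_by_shift_series_X_power[OF assms] opnorm_le bounded_mat_def by metis
qed

lemma series_norm_1: "series_bounded a 1 \<and> series_norm a 1 \<le> 1"
  using series_norm_X_power[of a 0 1] by simp

lemma series_norm_power:
  assumes "series_bounded a f"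
  shows "series_bounded a (f ^ n) \<and> series_norm a (f ^ n) \<le> series_norm a f ^ n"
proof (induction n)
  case 0
  then show ?case
    using series_norm_1 by simp
next
  case (Suc n)
  then have "series_norm a f * series_norm a (f ^ n) \<le> series_norm a f * series_norm a f ^ n"
    using assms opnorm_nonneg by (intro mult_left_mono) auto
  then show ?case
    using series_norm_mult[OF assms, of "f ^ n"] Suc by auto
qed

section \<open>Quasinilpotence of the shift\<close>

lemma resolvent_shift_recurrence:
  assumes "mmul (msub (Tm a) (msmul z mid)) B = mid"
  shows "(if i > 0 then a (i - 1) * B (i - 1) j else 0) - z * B i j = mid i j"
proof -
  let ?G = "shift_series a (fps_X - fps_const z)"
  have "msub (Tm a) (msmul z mid) = ?G"
    by (simp only: shift_series_X[symmetric] shift_series_1[of a, symmetric] msmul_shift_series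
        msub_shift_series mult_1_right)
  then have "mid i j = mmul ?G B i j"
    using assms by simp
  also have "\<dots> = (\<Sum>k\<le>i. ?G i k * B k j)"
    by (rule mmul_lower_triangular[OF lower_triangular_shift_series])
  also have "\<dots> = (\<Sum>k\<in>(if i > 0 then {i - 1, i} else {i}). ?G i k * B k j)"
    by (intro sum.mono_neutral_right) (auto simp: shift_series_def fps_X_nth)
  also have "\<dots> = (if i > 0 then a (i - 1) * B (i - 1) j else 0) - z * B i j"
    by (cases i) (auto simp: shift_series_def fps_X_nth)
  finally show ?thesis
    by simp
qed

lemma resolvent_shift_entries:
  assumes inv: "mmul (msub (Tm a) (msmul z mid)) B = mid" and z: "z \<noteq> 0"
  shows "B i j = (if j \<le> i then - shift_weight a j (i - j) / z ^ (i - j + 1) else 0)"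
proof -
  note row = resolvent_shift_recurrence[OF inv]
  show ?thesis
  proof (induction i arbitrary: j)
    case 0
    then show ?case
      using row[of 0 j] z by (auto simp: mid_def field_simps minus_equation_iff)
  next
    case (Suc i)
    have rec: "a i * B i j - z * B (Suc i) j = mid (Suc i) j"
      using row[of "Suc i" j] by simp
    consider "Suc i < j" | "j = Suc i" | "j \<le> i"
      by linarith
    then show ?case
    proof cases
      case 1
      then show ?thesis
        using rec Suc[of j] z by (simp add: mid_def)
    next
      case 2
      then show ?thesis
        using rec Suc[of j] z by (simp add: mid_def field_simps add_eq_0_iff)
    next
      case 3
      have "shift_weight a j (Suc i - j) = shift_weight a j (i - j) * a i"
        using shift_weight_add[of a j "i - j" 1] 3 by (simp add: Suc_diff_le)
      moreover have "B (Suc i) j = a i * B i j / z"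
        using rec 3 z by (simp add: mid_def field_simps)
      ultimately show ?thesis
        using Suc[of j] 3 z by (simp add: Suc_diff_le field_simps)
    qed
  qed
qed

text \<open>The resolvent \<open>(T - \<rho>)\<^sup>-\<^sup>1\<close> exists for every \<open>\<rho> > 0\<close>, and its entries are
  \<open>-shift_weight a j m / \<rho>\<^sup>m\<^sup>+\<^sup>1\<close>; boundedness of the entries is the estimate.\<close>
lemma quasinilpotent_shift_weight_decay:
  assumes qn: "quasinilpotent (Tm a)" and \<rho>: "\<rho> > 0"
  shows "\<exists>K\<ge>0. \<forall>j m. cmod (shift_weight a j m) \<le> K * \<rho> ^ m"
proof -
  define z where "z = complex_of_real \<rho>"
  have z: "z \<noteq> 0"
    using \<rho> by (simp add: z_def)
  then have "z \<notin> mspectrum (Tm a)"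
    using qn by (simp add: quasinilpotent_def)
  then obtain B where B: "bounded_mat B" and inv: "mmul (msub (Tm a) (msmul z mid)) B = mid"
    by (auto simp: mspectrum_def invertible_mat_def)
  have "cmod (shift_weight a j m) \<le> (opnorm B * \<rho>) * \<rho> ^ m" for j m
  proof -
    have "B (j + m) j = - shift_weight a j m / z ^ (m + 1)"
      using resolvent_shift_entries[OF inv z, of "j + m" j] by simp
    then have "cmod (shift_weight a j m) / \<rho> ^ (m + 1) \<le> opnorm B"
      using norm_entry_le_opnorm[OF B, of "j + m" j] \<rho>
      by (simp add: z_def norm_divide norm_power norm_mult del: of_real_power)
    then show ?thesis
      using \<rho> by (simp add: field_simps)
  qed
  moreover have "opnorm B * \<rho> \<ge> 0"
    using opnorm_nonneg[OF B] \<rho> by simp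
  ultimately show ?thesis
    by blast
qed

section \<open>The algebra \<open>A_T\<close> as power series\<close>

lemma polys_T_as_shift_series:
  "(\<lambda>i j. \<Sum>k\<in>{1..n}. c k * mpow (Tm a) k i j)
    = shift_series a (fps_X * (\<Sum>k\<in>{1..n}. fps_const (c k) * fps_X ^ (k - 1)))"
proof -
  have "fps_const (c k) * fps_X ^ k = fps_X * (fps_const (c k) * fps_X ^ (k - 1))"
    if "k \<in> {1..n}" for k
    using that by (cases k) (auto simp: ac_simps)
  then show ?thesis
    unfolding sum_mpow_Tm sum_distrib_left by (metis (no_types, lifting) sum.cong)
qed

context
  fixes a :: "nat \<Rightarrow> complex" and Bd :: real
  assumes Bd: "\<forall>n. cmod (a n) \<le> Bd"
begin

lemma series_bounded_X_power: "series_bounded a (fps_X ^ m)"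
  using series_norm_X_power[of a m "Bd ^ m"] norm_shift_weight_le[OF Bd] by blast

lemma polys_T_shift_series:
  assumes "P \<in> polys_T a"
  shows "\<exists>q. P = shift_series a (fps_X * q) \<and> series_bounded a q"
proof -
  obtain n c where "P = (\<lambda>i j. \<Sum>k\<in>{1..n}. c k * mpow (Tm a) k i j)"
    using assms by (auto simp: polys_T_def)
  moreover have "series_bounded a (\<Sum>k\<in>{1..n}. fps_const (c k) * fps_X ^ (k - 1))"
    by (intro series_norm_sum[THEN conjunct1])
      (auto intro!: series_norm_smult[THEN conjunct1] series_bounded_X_power)
  ultimately show ?thesis
    using polys_T_as_shift_series by blast
qed

lemma polys_T_bounded: "P \<in> polys_T a \<Longrightarrow> bounded_mat P"
  using polys_T_shift_series series_norm_mult series_bounded_X_power[of 1] by fastforce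

end

lemma zero_if_norm_le_eps:
  fixes z :: complex
  assumes "\<And>e. e > 0 \<Longrightarrow> cmod z \<le> e * C" "C \<ge> 0"
  shows "z = 0"
proof (rule ccontr)
  assume "z \<noteq> 0"
  then have "cmod z \<le> (cmod z / (C + 1)) * C"
    using assms(1)[of "cmod z / (C + 1)"] assms(2) by simp
  also have "\<dots> < cmod z"
    using \<open>z \<noteq> 0\<close> assms(2) by (simp add: field_simps)
  finally show False
    by simp
qed

lemma entrywise_limit_eq_0:
  assumes approx: "\<And>e. e > 0 \<Longrightarrow>
      \<exists>p. (\<forall>i j. cmod (S i j - shift_series a p i j) < e) \<and> fps_nth p 0 = 0"
    and vanish: "\<And>p. fps_nth p 0 = 0 \<Longrightarrow> shift_series a p i j = 0"
  shows "S i j = 0"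
proof -
  have "cmod (S i j) \<le> e * 1" if e: "e > 0" for e
  proof -
    obtain p where "\<forall>i j. cmod (S i j - shift_series a p i j) < e" "fps_nth p 0 = 0"
      using approx[OF e] by blast
    then have "cmod (S i j - shift_series a p i j) < e" "shift_series a p i j = 0"
      using vanish by blast+
    then show ?thesis
      by simp
  qed
  then show ?thesis
    by (intro zero_if_norm_le_eps[of _ 1]) auto
qed

text \<open>The coefficients are read off from the first column, using that no weight vanishes.\<close>
lemma entrywise_limit_shift_series:
  assumes approx: "\<And>e. e > 0 \<Longrightarrow>
      \<exists>p. (\<forall>i j. cmod (S i j - shift_series a p i j) < e) \<and> fps_nth p 0 = 0"
    and nz: "\<forall>n. a n \<noteq> 0"
  shows "\<exists>r. S = shift_series a r \<and> fps_nth r 0 = 0"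
proof -
  define r where "r = Abs_fps (\<lambda>m. S m 0 / shift_weight a 0 m)"
  have entries: "S i j = shift_series a r i j" for i j
  proof (cases "j \<le> i")
    case False
    then show ?thesis
      using entrywise_limit_eq_0[OF approx] by (simp add: shift_series_def)
  next
    case True
    define m where "m = i - j"
    define w0 where "w0 = shift_weight a 0 m"
    define w where "w = shift_weight a j m"
    have w0: "w0 \<noteq> 0"
      using shift_weight_nonzero[OF nz] by (simp add: w0_def)
    have "cmod (S i j - (S m 0 / w0) * w) \<le> e * (1 + cmod w / cmod w0)" if "e > 0" for e
    proof -
      obtain p where p: "\<forall>i j. cmod (S i j - shift_series a p i j) < e"
        using approx[OF \<open>e > 0\<close>] by blast
      let ?c = "fps_nth p m"
      have close: "cmod (S i j - ?c * w) < e" "cmod (?c * w0 - S m 0) < e"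
        using p[rule_format, of i j] p[rule_format, of m 0] True
        by (auto simp: shift_series_def w_def w0_def m_def norm_minus_commute)
      have "S i j - (S m 0 / w0) * w = (S i j - ?c * w) + (?c * w0 - S m 0) * (w / w0)"
        using w0 by (simp add: field_simps)
      then have "cmod (S i j - (S m 0 / w0) * w)
          \<le> cmod (S i j - ?c * w) + cmod (?c * w0 - S m 0) * (cmod w / cmod w0)"
        by (metis norm_triangle_ineq norm_mult norm_divide)
      also have "\<dots> \<le> e + e * (cmod w / cmod w0)"
        using close by (intro add_mono mult_right_mono) auto
      finally show ?thesis
        by (simp add: algebra_simps)
    qed
    then have "S i j = (S m 0 / w0) * w"
      using zero_if_norm_le_eps[of "S i j - (S m 0 / w0) * w"] by force
    then show ?thesis
      using True by (simp add: shift_series_def r_def m_def w_def w0_def)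
  qed
  have "fps_nth r 0 = 0"
    using entrywise_limit_eq_0[OF approx, of 0 0] by (simp add: r_def shift_series_def)
  moreover have "S = shift_series a r"
    by (intro ext entries)
  ultimately show ?thesis
    by blast
qed

lemma A_T_shift_series:
  assumes S: "S \<in> A_T a" and nz: "\<forall>n. a n \<noteq> 0" and Bd: "\<forall>n. cmod (a n) \<le> Bd"
  shows "\<exists>r. S = shift_series a r \<and> fps_nth r 0 = 0"
proof (rule entrywise_limit_shift_series[OF _ nz])
  fix e :: real assume "e > 0"
  then obtain P where P: "P \<in> polys_T a" "opnorm (msub S P) < e"
    using S by (auto simp: A_T_def)
  obtain q where q: "P = shift_series a (fps_X * q)"
    using polys_T_shift_series[OF Bd P(1)] by blast
  have "bounded_mat (msub S P)"
    using S polys_T_bounded[OF Bd P(1)] bounded_mat_msub by (auto simp: A_T_def)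
  then have "cmod (S i j - P i j) < e" for i j
    using norm_entry_le_opnorm[of "msub S P" i j] P(2) by (simp add: msub_def)
  then show "\<exists>p. (\<forall>i j. cmod (S i j - shift_series a p i j) < e) \<and> fps_nth p 0 = 0"
    using q by (intro exI[of _ "fps_X * q"]) auto
qed

section \<open>Fourier coefficients\<close>

lemma has_integral_cis_int:
  fixes n :: int
  assumes "n \<noteq> 0"
  shows "((\<lambda>t. cis (real_of_int n * (2 * pi * t))) has_integral 0) {0..1::real}"
proof -
  define A where "A = \<i> * complex_of_real (2 * pi * real_of_int n)"
  have A: "A \<noteq> 0"
    using assms by (simp add: A_def)
  have exp_A: "exp (t *\<^sub>R A) = cis (real_of_int n * (2 * pi * t))" for t
    by (simp add: A_def cis_conv_exp scaleR_conv_of_real algebra_simps)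
  have "((\<lambda>t. exp (t *\<^sub>R A) * inverse A) has_vector_derivative
      cis (real_of_int n * (2 * pi * t))) (at t within {0..1})" for t
  proof -
    have "((\<lambda>t. exp (t *\<^sub>R A) * inverse A) has_vector_derivative exp (t *\<^sub>R A) * A * inverse A)
        (at t within {0..1})"
      by (intro has_vector_derivative_mult_left exp_scaleR_has_vector_derivative_right)
    then show ?thesis
      using A exp_A by (simp add: mult.assoc)
  qed
  then have "((\<lambda>t. cis (real_of_int n * (2 * pi * t))) has_integral
      (exp (1 *\<^sub>R A) * inverse A - exp (0 *\<^sub>R A) * inverse A)) {0..1::real}"
    by (intro fundamental_theorem_of_calculus) auto
  moreover have "exp (1 *\<^sub>R A) = 1"
    using exp_A[of 1] cis_multiple_2pi[of "real_of_int n"] by (simp add: mult.commute mult.left_commute)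
  ultimately show ?thesis
    by simp
qed

lemma gamma_mat_cis:
  "gamma_mat (cis \<theta>) S p q * inverse (cis \<theta> ^ k) = S p q * cis ((real p - real q - real k) * \<theta>)"
proof -
  have "gamma_mat (cis \<theta>) S p q * inverse (cis \<theta> ^ k)
      = S p q * (cis (real p * \<theta>) * cis (real q * (- \<theta>)) * cis (- (real k * \<theta>)))"
    by (simp add: gamma_mat_def Complex.DeMoivre cis_cnj cis_inverse ac_simps)
  then show ?thesis
    by (simp add: cis_mult algebra_simps)
qed

lemma fourier_mat_eq_mzero:
  assumes "\<And>p q. p = q + k \<Longrightarrow> S p q = 0"
  shows "fourier_mat S k = mzero"
proof (intro ext)
  fix p q
  show "fourier_mat S k p q = mzero p q"
  proof (cases "p = q + k")
    case True
    then show ?thesis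
      using assms by (simp add: fourier_mat_def gamma_mat_def mzero_def)
  next
    case False
    define n where "n = int p - int q - int k"
    have "n \<noteq> 0"
      using False unfolding n_def by presburger
    then have "((\<lambda>t. S p q * cis (real_of_int n * (2 * pi * t))) has_integral S p q * 0) {0..1::real}"
      by (intro has_integral_mult_right has_integral_cis_int)
    moreover have "real p - real q - real k = real_of_int n"
      by (simp add: n_def)
    ultimately have "((\<lambda>t. gamma_mat (cis (2 * pi * t)) S p q * inverse (cis (2 * pi * t) ^ k))
        has_integral 0) {0..1}"
      by (simp add: gamma_mat_cis)
    then show ?thesis
      by (simp add: fourier_mat_def mzero_def integral_unique)
  qed
qed

lemma hat_shift_series_eq_0:
  assumes "fps_nth f k = 0" and nz: "\<forall>n. a n \<noteq> 0"
  shows "hat a (shift_series a f) k = 0"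
  unfolding hat_def
proof (rule the_equality)
  have "fourier_mat (shift_series a f) k = mzero"
    using assms by (intro fourier_mat_eq_mzero) (simp add: shift_series_def)
  then show F: "fourier_mat (shift_series a f) k = msmul 0 (mpow (Tm a) k)"
    by (simp add: msmul_def mzero_def fun_eq_iff)
  fix c assume "fourier_mat (shift_series a f) k = msmul c (mpow (Tm a) k)"
  then have "msmul c (mpow (Tm a) k) k 0 = msmul 0 (mpow (Tm a) k) k 0"
    using F by simp
  then show "c = 0"
    using shift_weight_nonzero[OF nz, of 0 k] by (simp add: msmul_def mpow_Tm shift_series_def)
qed

section \<open>Every element of \<open>A_T\<close> is quasinilpotent\<close>

lemma series_norm_X_mult_power:
  assumes decay: "\<forall>j m. cmod (shift_weight a j m) \<le> K * \<sigma> ^ m"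
    and K: "K \<ge> 0" and \<sigma>: "\<sigma> \<ge> 0" and q: "series_bounded a q" and \<eta>: "\<sigma> * series_norm a q \<le> \<eta>"
  shows "series_bounded a ((fps_X * q) ^ i) \<and> series_norm a ((fps_X * q) ^ i) \<le> K * \<eta> ^ i"
proof -
  have X: "series_bounded a (fps_X ^ i) \<and> series_norm a (fps_X ^ i) \<le> K * \<sigma> ^ i"
    using series_norm_X_power decay by blast
  have Q: "series_bounded a (q ^ i) \<and> series_norm a (q ^ i) \<le> series_norm a q ^ i"
    by (rule series_norm_power[OF q])
  have "(fps_X * q) ^ i = fps_X ^ i * q ^ i"
    by (simp add: power_mult_distrib)
  then have "series_bounded a ((fps_X * q) ^ i)
      \<and> series_norm a ((fps_X * q) ^ i) \<le> series_norm a (fps_X ^ i) * series_norm a (q ^ i)"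
    using series_norm_mult X Q by metis
  moreover have "series_norm a (fps_X ^ i) * series_norm a (q ^ i) \<le> (K * \<sigma> ^ i) * series_norm a q ^ i"
    using X Q opnorm_nonneg K \<sigma> by (intro mult_mono) auto
  moreover have "(K * \<sigma> ^ i) * series_norm a q ^ i \<le> K * \<eta> ^ i"
    using K \<sigma> \<eta> opnorm_nonneg[OF q]
    by (simp add: mult.assoc power_mult_distrib[symmetric] mult_left_mono power_mono)
  ultimately show ?thesis
    by linarith
qed

lemma series_norm_binomial_power:
  assumes p: "\<And>i. series_bounded a (p ^ i) \<and> series_norm a (p ^ i) \<le> K * \<eta> ^ i"
    and d: "series_bounded a d" "series_norm a d \<le> \<eta>" and K: "K \<ge> 0"
  shows "series_bounded a ((p + d) ^ M) \<and> series_norm a ((p + d) ^ M) \<le> K * (2 * \<eta>) ^ M"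
proof -
  have \<eta>: "\<eta> \<ge> 0"
    using d opnorm_nonneg by fastforce
  have D: "series_bounded a (d ^ i) \<and> series_norm a (d ^ i) \<le> \<eta> ^ i" for i
    using series_norm_power[OF d(1), of i] power_mono[OF d(2) opnorm_nonneg[OF d(1)], of i] by linarith
  define t where "t i = fps_const (of_nat (M choose i)) * (p ^ i * d ^ (M - i))" for i
  have binomial: "(p + d) ^ M = (\<Sum>i\<le>M. t i)"
    unfolding binomial_ring t_def by (intro sum.cong refl) (simp add: fps_of_nat ac_simps)
  have t: "series_bounded a (t i) \<and> series_norm a (t i) \<le> of_nat (M choose i) * (K * \<eta> ^ M)"
    if "i \<le> M" for i
  proof -
    have pd: "series_bounded a (p ^ i * d ^ (M - i))
        \<and> series_norm a (p ^ i * d ^ (M - i)) \<le> series_norm a (p ^ i) * series_norm a (d ^ (M - i))"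
      using series_norm_mult p D by blast
    have "series_norm a (p ^ i) * series_norm a (d ^ (M - i)) \<le> (K * \<eta> ^ i) * \<eta> ^ (M - i)"
      using p D opnorm_nonneg K \<eta> by (intro mult_mono) auto
    also have "\<dots> = K * \<eta> ^ M"
      using that by (simp add: mult.assoc power_add[symmetric])
    finally have "series_norm a (p ^ i * d ^ (M - i)) \<le> K * \<eta> ^ M"
      using pd by linarith
    then have "cmod (of_nat (M choose i) :: complex) * series_norm a (p ^ i * d ^ (M - i))
        \<le> of_nat (M choose i) * (K * \<eta> ^ M)"
      by (simp only: norm_of_nat) (rule mult_left_mono; simp)
    then show ?thesis
      using series_norm_smult[of a "p ^ i * d ^ (M - i)" "of_nat (M choose i)"] pd
      unfolding t_def by linarith
  qed
  have "series_bounded a (\<Sum>i\<le>M. t i) \<and> series_norm a (\<Sum>i\<le>M. t i) \<le> (\<Sum>i\<le>M. series_norm a (t i))"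
    using t by (intro series_norm_sum) auto
  moreover have "(\<Sum>i\<le>M. series_norm a (t i)) \<le> (\<Sum>i\<le>M. of_nat (M choose i) * (K * \<eta> ^ M))"
    using t by (intro sum_mono) auto
  moreover have "(\<Sum>i\<le>M. of_nat (M choose i) * (K * \<eta> ^ M)) = K * (2 * \<eta>) ^ M"
  proof -
    have "(\<Sum>i\<le>M. of_nat (M choose i) * (K * \<eta> ^ M)) = real (\<Sum>i\<le>M. M choose i) * (K * \<eta> ^ M)"
      by (simp add: sum_distrib_right)
    then show ?thesis
      by (simp add: choose_row_sum power_mult_distrib)
  qed
  ultimately show ?thesis
    using binomial by (metis order_trans)
qed

text \<open>Split \<open>r = X q + d\<close> with \<open>X q\<close> a polynomial close to \<open>r\<close>; the powers of \<open>X q\<close> decay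
  at any prescribed geometric rate because the shift weights do.\<close>
lemma A_T_series_power_decay:
  assumes R: "shift_series a r \<in> A_T a" and Bd: "\<forall>n. cmod (a n) \<le> Bd"
    and qn: "quasinilpotent (Tm a)" and \<delta>: "\<delta> > 0"
  shows "\<exists>K\<ge>0. \<forall>M. series_bounded a (r ^ M) \<and> series_norm a (r ^ M) \<le> K * \<delta> ^ M"
proof -
  define \<eta> where "\<eta> = \<delta> / 2"
  have \<eta>: "\<eta> > 0"
    using \<delta> by (simp add: \<eta>_def)
  obtain P where P: "P \<in> polys_T a" "opnorm (msub (shift_series a r) P) < \<eta>"
    using R \<eta> by (auto simp: A_T_def)
  obtain q where q: "P = shift_series a (fps_X * q)" "series_bounded a q"
    using polys_T_shift_series[OF Bd P(1)] by blast
  define d where "d = r - fps_X * q"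
  have "series_bounded a r"
    using R by (simp add: A_T_def)
  then have d: "series_bounded a d" "series_norm a d \<le> \<eta>"
    using series_norm_diff[of a r "fps_X * q"] polys_T_bounded[OF Bd P(1)] P(2)
    by (auto simp: d_def q(1) msub_shift_series)
  define \<sigma> where "\<sigma> = \<eta> / (series_norm a q + 1)"
  have \<sigma>: "\<sigma> > 0" "\<sigma> * series_norm a q \<le> \<eta>"
    using \<eta> opnorm_nonneg[OF q(2)] by (auto simp: \<sigma>_def field_simps)
  obtain K where K: "K \<ge> 0" "\<forall>j m. cmod (shift_weight a j m) \<le> K * \<sigma> ^ m"
    using quasinilpotent_shift_weight_decay[OF qn \<sigma>(1)] by blast
  have "series_bounded a ((fps_X * q + d) ^ M) \<and> series_norm a ((fps_X * q + d) ^ M) \<le> K * (2 * \<eta>) ^ M"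
    for M
    using series_norm_X_mult_power[OF K(2) K(1) _ q(2) \<sigma>(2)] \<sigma>(1)
    by (intro series_norm_binomial_power d K(1)) auto
  then show ?thesis
    using K(1) by (auto simp: d_def \<eta>_def)
qed

section \<open>The closed ideals \<open>\<langle>S\<rangle>\<close> and \<open>\<langle>T\<^sup>k\<rangle>\<close>\<close>

lemma neumann_telescope:
  fixes b C X r :: "'a::comm_ring_1"
  assumes "b * C = 1"
  shows "X - (\<Sum>m<M. b * (-b) ^ m * (X * (r + C) * r ^ m)) = (-b) ^ M * (X * r ^ M)"
proof (induction M)
  case 0
  then show ?case
    by simp
next
  case (Suc M)
  have "X - (\<Sum>m<Suc M. b * (-b) ^ m * (X * (r + C) * r ^ m))
      = (-b) ^ M * (X * r ^ M) - b * (-b) ^ M * (X * (r + C) * r ^ M)"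
    using Suc by simp
  also have "\<dots> = (-b) ^ M * (X * r ^ M) * (1 - b * C) - b * (-b) ^ M * (X * r ^ Suc M)"
    by (simp add: algebra_simps)
  finally show ?case
    using assms by simp
qed

lemma closed_ideal_shift_series_sum:
  assumes J: "closed_ideal a J" and s: "shift_series a s \<in> J" and R: "shift_series a r \<in> A_T a"
  shows "shift_series a (\<Sum>m<M. fps_const (\<beta> m) * (s * r ^ m)) \<in> J"
proof -
  have powers: "shift_series a (s * r ^ m) \<in> J" for m
  proof (induction m)
    case 0
    then show ?case
      using s by simp
  next
    case (Suc m)
    then have "mmul (shift_series a (s * r ^ m)) (shift_series a r) \<in> J"
      using J R by (auto simp: closed_ideal_def)
    then show ?case
      by (simp add: mmul_shift_series ac_simps)
  qed
  show ?thesis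
  proof (induction M)
    case 0
    then show ?case
      using J by (simp add: shift_series_0 closed_ideal_def)
  next
    case (Suc M)
    then have "madd (shift_series a (\<Sum>m<M. fps_const (\<beta> m) * (s * r ^ m)))
        (msmul (\<beta> M) (shift_series a (s * r ^ M))) \<in> J"
      using J powers by (auto simp: closed_ideal_def)
    then show ?case
      by (simp add: msmul_shift_series madd_shift_series)
  qed
qed

lemma fps_neumann_partial_sum:
  fixes c :: complex and X r :: "complex fps"
  assumes "c \<noteq> 0"
  shows "X - (\<Sum>m<M. fps_const (1 / c * (-1 / c) ^ m) * (X * (r + fps_const c) * r ^ m))
      = fps_const ((-1 / c) ^ M) * (X * r ^ M)"
proof -
  have "fps_const (1 / c) * fps_const c = 1"
    using assms by (simp flip: fps_const_mult)
  from neumann_telescope[OF this, of X r M]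
  show ?thesis
    by (simp add: fps_const_mult fps_const_neg fps_const_power)
qed

lemma series_norm_neumann_remainder:
  assumes Bd: "\<forall>n. cmod (a n) \<le> Bd" and c: "c \<noteq> 0"
    and decay: "\<forall>M. series_bounded a (r ^ M) \<and> series_norm a (r ^ M) \<le> K * (cmod c / 2) ^ M"
  shows "series_norm a (fps_const ((-1 / c) ^ M) * (fps_X ^ k * r ^ M))
      \<le> series_norm a (fps_X ^ k) * K * (1 / 2) ^ M"
proof -
  have Xk: "series_bounded a (fps_X ^ k)"
    by (rule series_bounded_X_power[OF Bd])
  have XrM: "series_bounded a (fps_X ^ k * r ^ M)
      \<and> series_norm a (fps_X ^ k * r ^ M) \<le> series_norm a (fps_X ^ k) * (K * (cmod c / 2) ^ M)"
    using series_norm_mult[OF Xk, of "r ^ M"] decay mult_left_mono[OF _ opnorm_nonneg[OF Xk]]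
    by (meson order_trans)
  have "series_norm a (fps_const ((-1 / c) ^ M) * (fps_X ^ k * r ^ M))
      \<le> cmod ((-1 / c) ^ M) * series_norm a (fps_X ^ k * r ^ M)"
    using series_norm_smult XrM by blast
  also have "\<dots> \<le> cmod ((-1 / c) ^ M) * (series_norm a (fps_X ^ k) * (K * (cmod c / 2) ^ M))"
    using XrM by (intro mult_left_mono) auto
  also have "\<dots> = series_norm a (fps_X ^ k) * K * (1 / 2) ^ M"
    using c by (simp add: norm_power norm_divide power_divide field_simps)
  finally show ?thesis .
qed

text \<open>The partial sums of \<open>S c\<^sup>-\<^sup>1 \<Sum>\<^sub>m (-R/c)^m\<close> lie in \<open>J\<close> and, by the decay of
  \<open>\<parallel>R^M\<parallel>\<close> at rate \<open>|c|/2\<close>, approach \<open>T^k\<close> geometrically.\<close>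
lemma closed_ideal_T_power_mem:
  assumes J: "closed_ideal a J" and Bd: "\<forall>n. cmod (a n) \<le> Bd" and qn: "quasinilpotent (Tm a)"
    and R: "shift_series a r \<in> A_T a" and c: "c \<noteq> 0"
    and S: "shift_series a (fps_X ^ k * (r + fps_const c)) \<in> J"
  shows "mpow (Tm a) k \<in> J"
proof -
  define partial where
    "partial M = (\<Sum>m<M. fps_const (1 / c * (-1 / c) ^ m) * (fps_X ^ k * (r + fps_const c) * r ^ m))"
    for M
  have "cmod c / 2 > 0"
    using c by simp
  then obtain K where
    K: "K \<ge> 0" "\<forall>M. series_bounded a (r ^ M) \<and> series_norm a (r ^ M) \<le> K * (cmod c / 2) ^ M"
    using A_T_series_power_decay[OF R Bd qn] by blast
  let ?N = "series_norm a (fps_X ^ k) * K"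
  have N: "?N \<ge> 0"
    using opnorm_nonneg[OF series_bounded_X_power[OF Bd]] K(1) by simp
  have "\<exists>X\<in>J. opnorm (msub (mpow (Tm a) k) X) < \<epsilon>" if \<epsilon>: "\<epsilon> > 0" for \<epsilon>
  proof -
    obtain M where M: "(1 / 2 :: real) ^ M < \<epsilon> / (?N + 1)"
      using real_arch_pow_inv[of "\<epsilon> / (?N + 1)" "1 / 2"] \<epsilon> N by auto
    have "msub (mpow (Tm a) k) (shift_series a (partial M))
        = shift_series a (fps_const ((-1 / c) ^ M) * (fps_X ^ k * r ^ M))"
      using fps_neumann_partial_sum[OF c, of "fps_X ^ k" r M]
      by (simp add: mpow_Tm msub_shift_series partial_def)
    moreover have "?N * (1 / 2) ^ M < \<epsilon>"
    proof -
      have "?N * (1 / 2) ^ M < (?N + 1) * (1 / 2) ^ M"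
        by (simp add: distrib_right)
      also have "\<dots> < \<epsilon>"
        using M N by (simp add: less_divide_eq mult.commute)
      finally show ?thesis .
    qed
    ultimately have "opnorm (msub (mpow (Tm a) k) (shift_series a (partial M))) < \<epsilon>"
      using series_norm_neumann_remainder[OF Bd c K(2), of M k] by simp
    moreover have "shift_series a (partial M) \<in> J"
      unfolding partial_def by (rule closed_ideal_shift_series_sum[OF J S R])
    ultimately show ?thesis
      by blast
  qed
  moreover have "bounded_mat (mpow (Tm a) k)"
    using series_bounded_X_power[OF Bd] by (simp add: mpow_Tm)
  ultimately show ?thesis
    using J by (auto simp: closed_ideal_def)
qed

lemma gen_ideal_eqI:
  assumes "\<And>J. closed_ideal a J \<Longrightarrow> S \<in> J \<longleftrightarrow> R \<in> J"
  shows "gen_ideal a S = gen_ideal a R"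
  unfolding gen_ideal_def using assms by (metis (mono_tags, lifting))

lemma gen_ideal_T_power_mult_unit:
  assumes Bd: "\<forall>n. cmod (a n) \<le> Bd" and nz: "\<forall>n. a n \<noteq> 0" and qn: "quasinilpotent (Tm a)"
    and hat: "hat a S k \<noteq> 0" and Q: "Q \<in> unitA_T a" and S: "S = mmul (mpow (Tm a) k) Q"
  shows "gen_ideal a S = gen_ideal a (mpow (Tm a) k)"
proof -
  obtain R c where Q: "Q = madd R (msmul c mid)" and R: "R \<in> A_T a"
    using assms(5) by (auto simp: unitA_T_def)
  obtain r where r: "R = shift_series a r" "fps_nth r 0 = 0"
    using A_T_shift_series[OF R nz Bd] by blast
  have S_series: "S = shift_series a (fps_X ^ k * (r + fps_const c))"
    unfolding S Q r(1) mpow_Tm shift_series_1[of a, symmetric]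
    by (simp add: msmul_shift_series madd_shift_series mmul_shift_series)
  have "c \<noteq> 0"
  proof
    assume "c = 0"
    then have "fps_nth (fps_X ^ k * (r + fps_const c)) k = 0"
      using r(2) by (simp add: fps_X_power_mult_nth)
    then show False
      using hat_shift_series_eq_0[OF _ nz] hat S_series by metis
  qed
  show ?thesis
  proof (rule gen_ideal_eqI)
    fix J assume J: "closed_ideal a J"
    show "S \<in> J \<longleftrightarrow> mpow (Tm a) k \<in> J"
    proof
      show "S \<in> J \<Longrightarrow> mpow (Tm a) k \<in> J"
        using closed_ideal_T_power_mem[OF J Bd qn _ \<open>c \<noteq> 0\<close>] R r(1) S_series by blast
      assume "mpow (Tm a) k \<in> J"
      then have "madd (mmul (mpow (Tm a) k) R) (msmul c (mpow (Tm a) k)) \<in> J"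
        using J R by (auto simp: closed_ideal_def)
      moreover have "madd (mmul (mpow (Tm a) k) R) (msmul c (mpow (Tm a) k)) = S"
        unfolding S_series mpow_Tm r(1)
        by (simp add: mmul_shift_series msmul_shift_series madd_shift_series algebra_simps)
      ultimately show "S \<in> J"
        by simp
    qed
  qed
qed

lemma polys_T_subset_A_T:
  assumes Bd: "\<forall>n. cmod (a n) \<le> Bd" and P: "P \<in> polys_T a"
  shows "P \<in> A_T a"
proof -
  have "msub P P = mzero"
    by (simp add: msub_def mzero_def)
  then have "\<forall>\<epsilon>>0. \<exists>Q\<in>polys_T a. opnorm (msub P Q) < \<epsilon>"
    using P opnorm_mzero by (intro allI impI bexI[of _ P]) simp_all
  then show ?thesis
    using polys_T_bounded[OF Bd P] by (simp add: A_T_def)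
qed

lemma polynomial_eq_T_power_mult_unit:
  assumes Bd: "\<forall>n. cmod (a n) \<le> Bd"
    and S: "S = (\<lambda>p q. \<Sum>j\<in>{k..n}. h j * mpow (Tm a) j p q)" and "k \<le> n"
  shows "\<exists>Q\<in>unitA_T a. S = mmul (mpow (Tm a) k) Q"
proof -
  define R where "R = (\<lambda>i j. \<Sum>l\<in>{1..n - k}. h (l + k) * mpow (Tm a) l i j)"
  have "R \<in> polys_T a"
    unfolding R_def polys_T_def by (intro CollectI exI[of _ "n - k"] exI[of _ "\<lambda>l. h (l + k)"] refl)
  then have "madd R (msmul (h k) mid) \<in> unitA_T a"
    unfolding unitA_T_def using polys_T_subset_A_T[OF Bd] by blast
  moreover have "(\<Sum>j\<in>{k..n}. fps_const (h j) * fps_X ^ j)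
      = fps_X ^ k * ((\<Sum>l\<in>{1..n - k}. fps_const (h (l + k)) * fps_X ^ l) + fps_const (h k))"
  proof -
    have "(\<Sum>j\<in>{Suc k..n}. fps_const (h j) * fps_X ^ j)
        = (\<Sum>l\<in>{1..n - k}. fps_const (h (l + k)) * fps_X ^ (l + k))"
      using \<open>k \<le> n\<close> by (intro sum.reindex_bij_witness[of _ "\<lambda>l. l + k" "\<lambda>j. j - k"]) auto
    then show ?thesis
      using \<open>k \<le> n\<close> by (simp add: sum.atLeast_Suc_atMost algebra_simps sum_distrib_left power_add)
  qed
  then have "S = mmul (mpow (Tm a) k) (madd R (msmul (h k) mid))"
    unfolding S R_def sum_mpow_Tm unfolding mpow_Tm shift_series_1[of a, symmetric]
    by (simp add: msmul_shift_series madd_shift_series mmul_shift_series)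
  ultimately show ?thesis
    by blast
qed

theorem mainTheorem13:
  fixes a :: "nat \<Rightarrow> complex" and S :: mat and k :: nat
  assumes "\<exists>B. \<forall>n. cmod (a n) \<le> B"
    and "\<forall>n. a n \<noteq> 0"
    and "quasinilpotent (Tm a)"
    and "S \<in> A_T a"
    and "S \<noteq> mzero"
    and "k \<ge> 1"
    and "\<forall>j. 1 \<le> j \<and> j < k \<longrightarrow> hat a S j = 0"
    and "hat a S k \<noteq> 0"
  shows "((\<exists>Q\<in>unitA_T a. S = mmul (mpow (Tm a) k) Q)
            \<longrightarrow> gen_ideal a S = gen_ideal a (mpow (Tm a) k))
       \<and> ((\<exists>n. S = (\<lambda>p q. \<Sum>j\<in>{k..n}. hat a S j * mpow (Tm a) j p q))
            \<longrightarrow> gen_ideal a S = gen_ideal a (mpow (Tm a) k))"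
proof -
  obtain Bd where Bd: "\<forall>n. cmod (a n) \<le> Bd"
    using assms(1) by blast
  have factor: "gen_ideal a S = gen_ideal a (mpow (Tm a) k)"
    if "\<exists>Q\<in>unitA_T a. S = mmul (mpow (Tm a) k) Q"
    using that gen_ideal_T_power_mult_unit[OF Bd assms(2,3,8)] by blast
  moreover have "gen_ideal a S = gen_ideal a (mpow (Tm a) k)"
    if S: "S = (\<lambda>p q. \<Sum>j\<in>{k..n}. hat a S j * mpow (Tm a) j p q)" for n
  proof -
    have "k \<le> n"
      using S assms(5) by (auto simp: mzero_def)
    then show ?thesis
      using factor polynomial_eq_T_power_mult_unit[OF Bd S] by blast
  qed
  ultimately show ?thesis
    by blast
qed
end
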